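(* Let $a\ge 0$, $\Delta t>0$, and let $z(\omega)$ be a real-valued function of the frequency $\omega$ with values in $[0,z_{\max}]$, where $z_{\max}=\max_\omega z(\omega)>0$. For each $\omega$ consider the quadratic $$(2+a\Delta t)^{2}\xi^{2}-4\big(2+a\Delta t-2\Delta t^{2}z(\omega)\big)\xi+(2-a\Delta t)\big(2+a\Delta t-2\Delta t^{2}z(\omega)\big)=0 .$$ If $$\Delta t\le\frac{2}{\sqrt{3\,z_{\max}}},$$ then both roots satisfy $|\xi|\le 1$ for every $\omega$.
   Context: This quadratic is the von Neumann characteristic equation of the semi-implicit (Nesterov-type) two-step scheme for $u_{tt}+au_t=-\nabla E$: $$v^{n}=u^{n}+\frac{2-a\Delta t}{2+a\Delta t}(u^{n}-u^{n-1}),\qquad u^{n+1}=v^{n}-\frac{2\Delta t^{2}}{2+a\Delta t}\nabla E(v^{n}),$$ obtained by linearizing $\nabla E$, writing the discrete Fourier transform of the linearized gradient of a grid function $w$ as $z(\omega)W(\omega)$ ($z$ the "gradient amplifier"), and substituting $U^{n\pm m}=\xi^{\pm m}U^n$. *)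

theory Defs
  imports Complex_Main
begin

end

theory Submission
  imports Defs
begin

text \<open>Proof idea: for a real quadratic \<open>A \<xi>\<^sup>2 - B \<xi> + C\<close> with \<open>A > 0\<close>, the Schur--Cohn
  (Jury) conditions \<open>p(1) \<ge> 0\<close>, \<open>p(-1) \<ge> 0\<close> and \<open>C \<le> A\<close> put both roots into the closed unit
  disc: a non-real pair has \<open>|\<xi>|\<^sup>2 = C/A\<close>, and real roots are trapped between \<open>-1\<close> and \<open>1\<close>
  because the vertex \<open>B/(2A)\<close> lies there. With \<open>h = a \<Delta>t\<close> and \<open>s = \<Delta>t\<^sup>2 z\<close> one finds
  \<open>p(1) = 2s(2+h)\<close> and \<open>p(-1) = 4(4 - 3s) + 2h(4 + s)\<close>, so everything reduces to
  \<open>s \<le> 4/3\<close>, which is exactly the step-size restriction.\<close>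

lemma real_quadratic_root_abs_le_1:
  fixes A B C x :: real
  assumes A: "A > 0" and C_le: "C \<le> A"
    and p1: "A - B + C \<ge> 0" and pm1: "A + B + C \<ge> 0"
    and root: "A * x^2 - B * x + C = 0"
  shows "\<bar>x\<bar> \<le> 1"
proof (rule ccontr)
  assume "\<not> \<bar>x\<bar> \<le> 1"
  then consider "x > 1" | "x < -1" by linarith
  then show False
  proof cases
    case 1
    have "A * x > A" using 1 A by simp
    have "A * x^2 - B * x + C = (A - B + C) + (x - 1) * (A * (x + 1) - B)"
      by (simp add: power2_eq_square algebra_simps)
    moreover have "(x - 1) * (A * (x + 1) - B) > 0"
      using 1 \<open>A * x > A\<close> C_le p1 by (intro mult_pos_pos) (auto simp: algebra_simps)
    ultimately show False using root p1 by linarith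
  next
    case 2
    have "A * x^2 - B * x + C = (A + B + C) + (x + 1) * (A * (x - 1) - B)"
      by (simp add: power2_eq_square algebra_simps)
    moreover have "A * (x - 1) < A * (-2)"
      using 2 A by (intro mult_strict_left_mono) auto
    then have "(x + 1) * (A * (x - 1) - B) > 0"
      using 2 C_le pm1 by (intro mult_neg_neg) auto
    ultimately show False using root pm1 by linarith
  qed
qed

lemma real_quadratic_complex_root_norm_le_1:
  fixes A B C :: real and \<xi> :: complex
  assumes A: "A > 0" and C_le: "C \<le> A"
    and p1: "A - B + C \<ge> 0" and pm1: "A + B + C \<ge> 0"
    and root: "of_real A * \<xi>^2 - of_real B * \<xi> + of_real C = 0"
  shows "cmod \<xi> \<le> 1"
proof -
  obtain x y where \<xi>: "\<xi> = Complex x y" by (cases \<xi>)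
  have re: "A * (x^2 - y^2) - B * x + C = 0"
    using arg_cong[OF root, of Re] by (simp add: \<xi> power2_eq_square)
  have im: "y * (2 * A * x - B) = 0"
    using arg_cong[OF root, of Im] by (simp add: \<xi> power2_eq_square algebra_simps)
  have "x^2 + y^2 \<le> 1"
  proof (cases "y = 0")
    case True
    then have "\<bar>x\<bar> \<le> 1"
      using real_quadratic_root_abs_le_1[OF A C_le p1 pm1] re by simp
    with True show ?thesis by (simp add: abs_square_le_1)
  next
    case False
    with im have "B = 2 * A * x" by simp
    with re have "A * (x^2 + y^2) = C" by (simp add: power2_eq_square algebra_simps)
    with C_le A show ?thesis by (metis mult.right_neutral mult_le_cancel_left_pos)
  qed
  then show ?thesis by (simp add: \<xi> cmod_def)
qed

lemma scheme_coefficients_satisfy_jury_conditions: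
  fixes h s :: real
  assumes h: "h \<ge> 0" and s: "0 \<le> s" "s \<le> 4/3"
  defines "A \<equiv> (2 + h)^2" and "B \<equiv> 4 * (2 + h - 2 * s)"
    and "C \<equiv> (2 - h) * (2 + h - 2 * s)"
  shows "C \<le> A" and "A - B + C \<ge> 0" and "A + B + C \<ge> 0"
proof -
  have "\<bar>2 - h\<bar> * \<bar>2 + h - 2 * s\<bar> \<le> (2 + h) * (2 + h)"
    using h s by (intro mult_mono) auto
  then show "C \<le> A"
    unfolding A_def C_def by (simp add: power2_eq_square abs_mult[symmetric])
  have "A - B + C = 2 * s * (2 + h)"
    unfolding A_def B_def C_def by (simp add: power2_eq_square algebra_simps)
  then show "A - B + C \<ge> 0" using h s by simp
  have "A + B + C = 4 * (4 - 3 * s) + 2 * h * (4 + s)"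
    unfolding A_def B_def C_def by (simp add: power2_eq_square algebra_simps)
  then show "A + B + C \<ge> 0" using h s by simp
qed

lemma sq_step_mult_le_four_thirds:
  fixes dt zmax \<zeta> :: real
  assumes "dt > 0" "zmax > 0" "0 \<le> \<zeta>" "\<zeta> \<le> zmax" "dt \<le> 2 / sqrt (3 * zmax)"
  shows "dt^2 * \<zeta> \<le> 4/3"
proof -
  have "dt^2 \<le> (2 / sqrt (3 * zmax))^2"
    using assms by (intro power_mono) auto
  also have "\<dots> = 4 / (3 * zmax)"
    using assms by (simp add: power_divide)
  finally have "dt^2 * \<zeta> \<le> 4 / (3 * zmax) * zmax"
    using assms by (intro mult_mono) auto
  also have "\<dots> = 4/3" using assms by simp
  finally show ?thesis .
qed

theorem mainTheorem6:
  fixes a dt zmax :: real and z :: "'w \<Rightarrow> real"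
  assumes "a \<ge> 0" and "dt > 0"
    and "\<And>w. 0 \<le> z w \<and> z w \<le> zmax"
    and "\<exists>w. z w = zmax" and "zmax > 0"
    and "dt \<le> 2 / sqrt (3 * zmax)"
  shows "\<forall>w. \<forall>\<xi>::complex.
           complex_of_real ((2 + a*dt)^2) * \<xi>^2
           - complex_of_real (4 * (2 + a*dt - 2 * dt^2 * z w)) * \<xi>
           + complex_of_real ((2 - a*dt) * (2 + a*dt - 2 * dt^2 * z w)) = 0
           \<longrightarrow> cmod \<xi> \<le> 1"
proof (intro allI impI)
  fix w and \<xi> :: complex
  assume root: "complex_of_real ((2 + a*dt)^2) * \<xi>^2
           - complex_of_real (4 * (2 + a*dt - 2 * dt^2 * z w)) * \<xi>
           + complex_of_real ((2 - a*dt) * (2 + a*dt - 2 * dt^2 * z w)) = 0"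
  have h: "a * dt \<ge> 0" and s: "0 \<le> dt^2 * z w" "dt^2 * z w \<le> 4/3"
    using assms sq_step_mult_le_four_thirds[of dt zmax "z w"] by auto
  from scheme_coefficients_satisfy_jury_conditions[OF h s]
  show "cmod \<xi> \<le> 1"
    by (intro real_quadratic_complex_root_norm_le_1[OF _ _ _ _ root])
      (use h in \<open>simp_all add: mult.assoc\<close>)
qed

end
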